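(* Let $\mathfrak{G}$ be the CFSTR on species $A,B,C,D,E,F$ whose non-flow reactions are $D\rightleftarrows A+B+C$, $E\rightleftarrows A+B+C$, $F\rightleftarrows A+B$, together with the outflow reaction $X\to0$ for each of the six species (and possibly any inflow reactions). Then $\mathfrak{G}$ passes the Jacobian Criterion.
   Context: A reaction $y\to y'$ has complexes $y,y'\in\mathbb{Z}^s_{\ge0}$, $y\neq y'$; $u\rightleftarrows v$ denotes the two reactions $u\to v$ and $v\to u$; inflows $0\to X$ and outflows $X\to0$ are flow reactions. For a list of $s$ reactions $y_k\to y_k'$ on $s$ species: reactant matrix $M$ (row $k$ is $y_k$), reaction matrix $R$ (row $k$ is $y_k-y'_k$), orientation $\operatorname{sign}(\det M\det R)$. A CFSTR with $s$ species passes the Jacobian Criterion if every choice of $s$ distinct reactions containing no inflow reaction yields $s\times s$ reactant and reaction matrices (columns indexed by all species) with nonnegative orientation. *)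

theory Defs
  imports "HOL-Analysis.Analysis"
begin

type_synonym 's complex = "'s \<Rightarrow> nat"
type_synonym 's reaction = "'s complex \<times> 's complex"

definition unit_cplx :: "'s \<Rightarrow> 's complex" where
  "unit_cplx X = (\<lambda>Y. if Y = X then 1 else 0)"

definition inflow :: "'s \<Rightarrow> 's reaction" where
  "inflow X = (\<lambda>_. 0, unit_cplx X)"

definition outflow :: "'s \<Rightarrow> 's reaction" where
  "outflow X = (unit_cplx X, \<lambda>_. 0)"

definition is_inflow :: "'s reaction \<Rightarrow> bool" where
  "is_inflow r \<longleftrightarrow> (\<exists>X. r = inflow X)"

definition reactant_matrix :: "('k \<Rightarrow> 's reaction) \<Rightarrow> real ^ 's ^ 'k" where
  "reactant_matrix f = (\<chi> k j. real (fst (f k) j))"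

definition reaction_matrix :: "('k \<Rightarrow> 's reaction) \<Rightarrow> real ^ 's ^ 'k" where
  "reaction_matrix f = (\<chi> k j. real (fst (f k) j) - real (snd (f k) j))"

definition orientation :: "('s::finite \<Rightarrow> 's reaction) \<Rightarrow> real" where
  "orientation f = sgn (det (reactant_matrix f) * det (reaction_matrix f))"

text \<open>A choice of s distinct reactions is an injective map from an s-element row index set
(here 's itself) into N.\<close>

definition passes_jacobian_criterion :: "('s::finite) reaction set \<Rightarrow> bool" where
  "passes_jacobian_criterion N \<longleftrightarrow>
     (\<forall>f :: 's \<Rightarrow> 's reaction. inj f \<longrightarrow> (\<forall>k. f k \<in> N \<and> \<not> is_inflow (f k))
        \<longrightarrow> orientation f \<ge> 0)"

datatype species = A | B | C | D | E | F

lemma UNIV_species: "(UNIV :: species set) = {A, B, C, D, E, F}"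
  using species.exhaust by auto

instance species :: finite
  by standard (simp add: UNIV_species)

definition ABC :: "species complex" where
  "ABC = (\<lambda>X. unit_cplx A X + unit_cplx B X + unit_cplx C X)"

definition AB :: "species complex" where
  "AB = (\<lambda>X. unit_cplx A X + unit_cplx B X)"

definition nonflow_reactions :: "species reaction set" where
  "nonflow_reactions =
     {(unit_cplx D, ABC), (ABC, unit_cplx D),
      (unit_cplx E, ABC), (ABC, unit_cplx E),
      (unit_cplx F, AB), (AB, unit_cplx F)}"

definition network :: "species reaction set \<Rightarrow> species reaction set" where
  "network I = nonflow_reactions \<union> range outflow \<union> I"

end

theory Submission
  imports Defs
begin

(* Choose six distinct non-inflow reactions, with reactant matrix M and
   reaction matrix R; we show det M = 0, det R = 0 or det R = det M, so that the
   orientation sgn (det M * det R) is nonnegative.  The degenerate cases are general: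
   a reaction chosen together with its reverse gives opposite rows of R; two reactions
   with the same reactant complex give equal rows of M; a species absent from all
   reactants gives a zero column of M.  In the remaining generic case every formation
   reaction A+B+C -> D (etc.) must come with the outflow of its product, while no decay
   D -> A+B+C comes with the outflow of D. *)

lemma row_vec_lambda [simp]: "row i (\<chi> k. r k) = r i"
  by (simp add: row_def vec_eq_iff)

lemma det_add_span_rows:
  fixes A :: "'a::field^'n^'n"
  assumes "\<And>i. i \<in> K \<Longrightarrow> v i \<in> vec.span {row j A | j. j \<notin> K}"
  shows "det (\<chi> i. if i \<in> K then row i A + v i else row i A) = det A"
proof -
  have "finite K" by simp
  then show ?thesis using assms
  proof (induction K rule: finite_induct)
    case empty
    then show ?case by (simp add: row_def)
  next
    case (insert k K)
    define B where "B = (\<chi> i. if i \<in> K then row i A + v i else row i A)"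
    have row_B: "row i B = (if i \<in> K then row i A + v i else row i A)" for i
      by (simp add: B_def row_def vec_eq_iff)
    have rows_outside: "{row j A | j. j \<notin> insert k K} \<subseteq> {row j B | j. j \<noteq> k}"
      by (auto simp: row_B)
    have "(\<chi> i. if i \<in> insert k K then row i A + v i else row i A)
        = (\<chi> i. if i = k then row k B + v k else row i B)"
      using insert.hyps(2) by (intro arg_cong[where f=vec_lambda] ext) (auto simp: row_B)
    also have "det \<dots> = det B"
      using insert.prems[of k] vec.span_mono[OF rows_outside] by (intro det_row_span) auto
    also have "det B = det A"
      unfolding B_def
    proof (rule insert.IH)
      fix i assume "i \<in> K"
      have "{row j A | j. j \<notin> insert k K} \<subseteq> {row j A | j. j \<notin> K}" by auto
      then show "v i \<in> vec.span {row j A | j. j \<notin> K}"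
        using insert.prems[of i] \<open>i \<in> K\<close> vec.span_mono by blast
    qed
    finally show ?case .
  qed
qed

lemma row_mat_1: "row j (mat 1) = axis j (1::'a::zero_neq_one)"
  by (auto simp: row_def mat_def axis_def vec_eq_iff)

lemma span_identity_rows:
  fixes w :: "'a::field^'n"
  assumes "\<And>j. j \<in> K \<Longrightarrow> w $ j = 0"
  shows "w \<in> vec.span {row j (mat 1) | j. j \<notin> K}"
proof -
  have "w = (\<Sum>j\<in>UNIV. w $ j *s axis j 1)" by (rule basis_expansion[symmetric])
  also have "\<dots> = (\<Sum>j\<in>- K. w $ j *s axis j 1)"
    using assms by (intro sum.mono_neutral_right) auto
  also have "\<dots> = (\<Sum>j\<in>- K. w $ j *s row j (mat 1))"
    by (simp add: row_mat_1)
  also have "\<dots> \<in> vec.span {row j (mat 1) | j. j \<notin> K}"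
    by (intro vec.span_sum vec.span_scale vec.span_base) auto
  finally show ?thesis .
qed

lemma reactant_matrix_nth [simp]: "reactant_matrix f $ k $ Y = real (fst (f k) Y)"
  by (simp add: reactant_matrix_def)

lemma reaction_matrix_nth [simp]:
  "reaction_matrix f $ k $ Y = real (fst (f k) Y) - real (snd (f k) Y)"
  by (simp add: reaction_matrix_def)

lemma orientation_nonneg:
  fixes f :: "'s::finite \<Rightarrow> 's reaction"
  assumes "det (reactant_matrix f) = 0 \<or> det (reaction_matrix f) = 0
      \<or> det (reaction_matrix f) = det (reactant_matrix f)"
  shows "orientation f \<ge> 0"
  using assms by (auto simp: orientation_def sgn_if zero_le_mult_iff)

lemma det_opposite_rows:
  fixes A :: "'a::field^'n^'n"
  assumes "i \<noteq> j" "row i A = - row j A"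
  shows "det A = 0"
proof -
  have "det A = det (\<chi> k. if k = i then row i A + 1 *s row j A else row k A)"
    using det_row_operation[OF assms(1), of A 1] by simp
  also have "\<dots> = 0"
    by (rule det_zero_row(2)[of i]) (simp add: assms(2) scalar_mult_eq_scaleR)
  finally show ?thesis .
qed

lemma det_reaction_matrix_reverse:
  fixes f :: "'s::finite \<Rightarrow> 's reaction"
  assumes "i \<noteq> j" "f j = prod.swap (f i)"
  shows "det (reaction_matrix f) = 0"
  by (rule det_opposite_rows[OF assms(1)]) (simp add: assms(2) row_def vec_eq_iff)

lemma det_reactant_matrix_shared:
  fixes f :: "'s::finite \<Rightarrow> 's reaction"
  assumes "i \<noteq> j" "fst (f i) = fst (f j)"
  shows "det (reactant_matrix f) = 0"
  by (rule det_identical_rows[OF assms(1)]) (simp add: assms(2) row_def vec_eq_iff)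

lemma det_reactant_matrix_absent:
  fixes f :: "'s::finite \<Rightarrow> 's reaction"
  assumes "\<And>k. fst (f k) Y = 0"
  shows "det (reactant_matrix f) = 0"
  by (rule det_zero_column(2)[of Y]) (simp add: assms column_def vec_eq_iff)

(* The partner of a non-intermediate is an
   unused dummy value; only the labels in 'labels' are meaningful. *)
datatype rlabel = Decay species | Assoc species | Out species

definition intermediate :: "species set" where
  "intermediate = {D, E, F}"

fun partner :: "species \<Rightarrow> species complex" where
  "partner D = ABC" | "partner E = ABC" | "partner F = AB" | "partner _ = (\<lambda>_. 0)"

fun rxn :: "rlabel \<Rightarrow> species reaction" where
  "rxn (Decay X) = (unit_cplx X, partner X)"
| "rxn (Assoc X) = (partner X, unit_cplx X)"
| "rxn (Out X) = outflow X"

definition labels :: "rlabel set" where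
  "labels = Decay ` intermediate \<union> Assoc ` intermediate \<union> range Out"

lemma labels_iff [simp]:
  "Decay X \<in> labels \<longleftrightarrow> X \<in> intermediate" "Assoc X \<in> labels \<longleftrightarrow> X \<in> intermediate"
  "Out X \<in> labels"
  by (auto simp: labels_def)

lemma noninflow_reactions_labelled: "nonflow_reactions \<union> range outflow = rxn ` labels"
  by (auto simp: nonflow_reactions_def labels_def intermediate_def image_iff)

(* Distinct labels name distinct reactions; this is decided by evaluating both
   complexes at every species. *)
definition signature :: "species reaction \<Rightarrow> nat list \<times> nat list" where
  "signature r = (map (fst r) [A, B, C, D, E, F], map (snd r) [A, B, C, D, E, F])"

lemma labels_explicit:
  "labels = {Decay D, Decay E, Decay F, Assoc D, Assoc E, Assoc F,
             Out A, Out B, Out C, Out D, Out E, Out F}"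
  by (auto simp: labels_def intermediate_def UNIV_species)

lemma inj_on_rxn: "inj_on rxn labels"
proof (rule inj_onI)
  fix l l' assume "l \<in> labels" "l' \<in> labels" "rxn l = rxn l'"
  then have "signature (rxn l) = signature (rxn l')" by simp
  with \<open>l \<in> labels\<close> \<open>l' \<in> labels\<close> show "l = l'"
    unfolding labels_explicit
    by (auto simp: signature_def unit_cplx_def ABC_def AB_def outflow_def)
qed

(* The partner complexes contain no intermediate, so an intermediate Y occurs as a
   reactant only in the decay of Y and in the outflow of Y. *)
lemma partner_vanishes_on_intermediate: "Y \<in> intermediate \<Longrightarrow> partner X Y = 0"
  by (cases X) (auto simp: intermediate_def ABC_def AB_def unit_cplx_def)

lemma reactant_at_intermediate:
  "Y \<in> intermediate \<Longrightarrow> fst (rxn l) Y = (if l = Decay Y \<or> l = Out Y then 1 else 0)"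
  by (cases l) (auto simp: unit_cplx_def outflow_def partner_vanishes_on_intermediate)

lemma sum_unit_cplx:
  fixes X :: "'s::finite"
  shows "(\<Sum>Y\<in>UNIV. real (unit_cplx X Y) * c Y) = c X"
proof -
  have "real (unit_cplx X Y) * c Y = (if Y = X then c Y else 0)" for Y
    by (simp add: unit_cplx_def)
  then show ?thesis by (simp add: sum.delta)
qed

lemma decay_label_intermediate:
  assumes "range \<phi> \<subseteq> labels" "Decay Y \<in> range \<phi>"
  shows "Y \<in> intermediate"
proof -
  have "Decay Y \<in> labels" using assms by blast
  then show ?thesis by simp
qed

(* P carries, in each decay row, the partner complex produced; N records, for each
   intermediate Y whose decay is chosen, the partner of Y.  In the generic case
   R reduces to M - P = M (1 - N), and 1 - N is unitriangular. *)
definition decay_products :: "(species \<Rightarrow> rlabel) \<Rightarrow> real^species^species" where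
  "decay_products \<phi> = (\<chi> k Z. case \<phi> k of Decay X \<Rightarrow> real (partner X Z) | _ \<Rightarrow> 0)"

definition decay_map :: "(species \<Rightarrow> rlabel) \<Rightarrow> real^species^species" where
  "decay_map \<phi> = (\<chi> Y Z. if Decay Y \<in> range \<phi> then real (partner Y Z) else 0)"

(* If every chosen formation reaction P_X -> X comes with the outflow of X, adding
   the outflow row to it turns its row of R into the reactant row P_X, so
   det R = det (M - P). *)
lemma det_reaction_matrix_eliminate_assoc:
  assumes "\<And>X. Assoc X \<in> range \<phi> \<Longrightarrow> Out X \<in> range \<phi>"
  shows "det (reaction_matrix (rxn \<circ> \<phi>)) = det (reactant_matrix (rxn \<circ> \<phi>) - decay_products \<phi>)"
proof -
  let ?R = "reaction_matrix (rxn \<circ> \<phi>)"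
  define K where "K = {k. \<exists>X. \<phi> k = Assoc X}"
  have "\<forall>k\<in>K. \<exists>j X. \<phi> k = Assoc X \<and> \<phi> j = Out X"
  proof
    fix k assume "k \<in> K"
    then obtain X where X: "\<phi> k = Assoc X" by (auto simp: K_def)
    then have "Out X \<in> range \<phi>" using assms[of X] rangeI[of \<phi> k] by simp
    with X show "\<exists>j X. \<phi> k = Assoc X \<and> \<phi> j = Out X" by auto
  qed
  then obtain g where g: "\<And>k. k \<in> K \<Longrightarrow> \<exists>X. \<phi> k = Assoc X \<and> \<phi> (g k) = Out X"
    using bchoice[of K "\<lambda>k j. \<exists>X. \<phi> k = Assoc X \<and> \<phi> j = Out X"] by blast
  have g_outside: "g k \<notin> K" if "k \<in> K" for k
    using g[OF that] by (auto simp: K_def)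
  have "det ?R = det (\<chi> k. if k \<in> K then row k ?R + row (g k) ?R else row k ?R)"
  proof (rule det_add_span_rows[symmetric])
    fix k assume "k \<in> K"
    then show "row (g k) ?R \<in> vec.span {row j ?R | j. j \<notin> K}"
      using g_outside by (intro vec.span_base) blast
  qed
  also have "(\<chi> k. if k \<in> K then row k ?R + row (g k) ?R else row k ?R)
      = reactant_matrix (rxn \<circ> \<phi>) - decay_products \<phi>"
  unfolding vec_eq_iff proof (intro allI)
    fix k Z
    show "(\<chi> k. if k \<in> K then row k ?R + row (g k) ?R else row k ?R) $ k $ Z
        = (reactant_matrix (rxn \<circ> \<phi>) - decay_products \<phi>) $ k $ Z"
    proof (cases "k \<in> K")
      case True
      then obtain X where "\<phi> k = Assoc X" "\<phi> (g k) = Out X" using g by blast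
      with True show ?thesis by (simp add: row_def decay_products_def outflow_def)
    next
      case False
      then show ?thesis
        by (cases "\<phi> k") (simp_all add: K_def row_def decay_products_def outflow_def)
    qed
  qed
  finally show ?thesis .
qed

lemma matrix_mult_identity_minus:
  fixes M N :: "'a::comm_ring_1^'n^'n"
  shows "M ** (mat 1 - N) = M - M ** N"
proof -
  have "(M ** (mat 1 - N)) $ i $ j = (M ** mat 1) $ i $ j - (M ** N) $ i $ j" for i j
    by (simp only: matrix_matrix_mult_def vec_lambda_beta vector_minus_component right_diff_distrib
        sum_subtractf)
  then show ?thesis by (simp add: vec_eq_iff)
qed

(* If no chosen decay of X comes with the outflow of X, the only chosen row with a
   reactant X is the decay of X, whence M - P = M (1 - N). *)
lemma reactant_minus_decay_products:
  assumes valid: "range \<phi> \<subseteq> labels"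
    and decay_alone: "\<And>X. Decay X \<in> range \<phi> \<Longrightarrow> Out X \<notin> range \<phi>"
  shows "reactant_matrix (rxn \<circ> \<phi>) - decay_products \<phi>
       = reactant_matrix (rxn \<circ> \<phi>) ** (mat 1 - decay_map \<phi>)"
proof -
  have "reactant_matrix (rxn \<circ> \<phi>) ** decay_map \<phi> = decay_products \<phi>"
  unfolding vec_eq_iff proof (intro allI)
    fix k Z
    have "(\<Sum>Y\<in>UNIV. real (fst (rxn (\<phi> k)) Y) * decay_map \<phi> $ Y $ Z) = decay_products \<phi> $ k $ Z"
    proof (cases "\<phi> k")
      case (Decay X)
      then show ?thesis using rangeI[of \<phi> k] by (simp add: sum_unit_cplx decay_map_def decay_products_def)
    next
      case (Out X)
      then have "Decay X \<notin> range \<phi>" using decay_alone by (metis rangeI)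
      then show ?thesis using Out by (simp add: outflow_def sum_unit_cplx decay_map_def decay_products_def)
    next
      case (Assoc X)
      have "real (partner X Y) * decay_map \<phi> $ Y $ Z = 0" for Y
        using decay_label_intermediate[OF valid]
        by (auto simp: decay_map_def partner_vanishes_on_intermediate)
      then have "(\<Sum>Y\<in>UNIV. real (partner X Y) * decay_map \<phi> $ Y $ Z) = 0"
        by (intro sum.neutral) blast
      then show ?thesis using Assoc by (simp add: decay_products_def)
    qed
    then show "(reactant_matrix (rxn \<circ> \<phi>) ** decay_map \<phi>) $ k $ Z = decay_products \<phi> $ k $ Z"
      by (simp add: matrix_matrix_mult_def)
  qed
  then show ?thesis by (simp add: matrix_mult_identity_minus)
qed

(* The rows of N vanish outside the intermediates and its columns vanish on them. *)
lemma det_identity_minus_decay_map: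
  assumes valid: "range \<phi> \<subseteq> labels"
  shows "det (mat 1 - decay_map \<phi>) = 1"
proof -
  have "mat 1 - decay_map \<phi> = (\<chi> Y. if Y \<in> intermediate
          then row Y (mat 1) + - row Y (decay_map \<phi>) else row Y (mat 1))"
    using decay_label_intermediate[OF valid] by (auto simp: vec_eq_iff row_def decay_map_def)
  also have "det \<dots> = det (mat 1 :: real^species^species)"
    by (intro det_add_span_rows vec.span_neg span_identity_rows)
       (simp add: row_def decay_map_def partner_vanishes_on_intermediate)
  finally show ?thesis by simp
qed

lemma det_reaction_matrix_eq_reactant_matrix:
  assumes valid: "range \<phi> \<subseteq> labels"
    and no_reverse: "\<And>X. \<not> (Decay X \<in> range \<phi> \<and> Assoc X \<in> range \<phi>)"
    and distinct_reactants: "inj (\<lambda>k. fst (rxn (\<phi> k)))"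
    and all_present: "\<And>Y. \<exists>k. fst (rxn (\<phi> k)) Y \<noteq> 0"
  shows "det (reaction_matrix (rxn \<circ> \<phi>)) = det (reactant_matrix (rxn \<circ> \<phi>))"
proof -
  have assoc_out: "Out X \<in> range \<phi>" if assoc: "Assoc X \<in> range \<phi>" for X
  proof -
    have "Assoc X \<in> labels" using assoc valid by blast
    then have X: "X \<in> intermediate" by simp
    obtain k where "fst (rxn (\<phi> k)) X \<noteq> 0" using all_present by blast
    then have "\<phi> k = Decay X \<or> \<phi> k = Out X"
      using reactant_at_intermediate[OF X] by (simp split: if_splits)
    moreover have "\<phi> k \<noteq> Decay X" using no_reverse[of X] assoc by (metis rangeI)
    ultimately show ?thesis by (metis rangeI)
  qed
  have decay_alone: "Out X \<notin> range \<phi>" if "Decay X \<in> range \<phi>" for X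
  proof
    assume "Out X \<in> range \<phi>"
    with that obtain i j where ij: "\<phi> i = Decay X" "\<phi> j = Out X" by (metis rangeE)
    then have "fst (rxn (\<phi> i)) = fst (rxn (\<phi> j))" by (simp add: outflow_def)
    then have "i = j" using distinct_reactants by (simp add: inj_def)
    with ij show False by simp
  qed
  have "det (reaction_matrix (rxn \<circ> \<phi>)) = det (reactant_matrix (rxn \<circ> \<phi>) - decay_products \<phi>)"
    using assoc_out by (rule det_reaction_matrix_eliminate_assoc)
  also have "\<dots> = det (reactant_matrix (rxn \<circ> \<phi>) ** (mat 1 - decay_map \<phi>))"
    using valid decay_alone by (subst reactant_minus_decay_products) auto
  also have "\<dots> = det (reactant_matrix (rxn \<circ> \<phi>))"
    by (simp add: det_mul det_identity_minus_decay_map[OF valid])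
  finally show ?thesis .
qed

lemma orientation_labelled_choice:
  assumes valid: "range \<phi> \<subseteq> labels"
  shows "orientation (rxn \<circ> \<phi>) \<ge> 0"
proof (rule orientation_nonneg)
  consider (reverse) X where "Decay X \<in> range \<phi>" "Assoc X \<in> range \<phi>"
    | (shared) "\<not> inj (\<lambda>k. fst (rxn (\<phi> k)))"
    | (absent) Y where "\<And>k. fst (rxn (\<phi> k)) Y = 0"
    | (generic) "\<And>X. \<not> (Decay X \<in> range \<phi> \<and> Assoc X \<in> range \<phi>)"
        "inj (\<lambda>k. fst (rxn (\<phi> k)))" "\<And>Y. \<exists>k. fst (rxn (\<phi> k)) Y \<noteq> 0"
    by blast
  then show "det (reactant_matrix (rxn \<circ> \<phi>)) = 0 \<or> det (reaction_matrix (rxn \<circ> \<phi>)) = 0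
      \<or> det (reaction_matrix (rxn \<circ> \<phi>)) = det (reactant_matrix (rxn \<circ> \<phi>))"
  proof cases
    case reverse
    then obtain i j where ij: "\<phi> i = Decay X" "\<phi> j = Assoc X" by (metis rangeE)
    then have "i \<noteq> j" by auto
    moreover have "(rxn \<circ> \<phi>) j = prod.swap ((rxn \<circ> \<phi>) i)" using ij by simp
    ultimately show ?thesis using det_reaction_matrix_reverse by blast
  next
    case shared
    then obtain i j where "i \<noteq> j" "fst ((rxn \<circ> \<phi>) i) = fst ((rxn \<circ> \<phi>) j)"
      by (auto simp: inj_def)
    then show ?thesis using det_reactant_matrix_shared by blast
  next
    case absent
    then show ?thesis using det_reactant_matrix_absent[of "rxn \<circ> \<phi>" Y] by simp
  next
    case generic
    then show ?thesis using det_reaction_matrix_eq_reactant_matrix[OF valid] by blast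
  qed
qed

lemma labelled_choice:
  fixes f :: "species \<Rightarrow> species reaction"
  assumes "range f \<subseteq> rxn ` labels"
  obtains \<phi> where "range \<phi> \<subseteq> labels" "f = rxn \<circ> \<phi>"
proof
  let ?\<phi> = "the_inv_into labels rxn \<circ> f"
  have "f k = rxn (?\<phi> k)" for k
    using f_the_inv_into_f[OF inj_on_rxn subsetD[OF assms rangeI]] by simp
  then show "f = rxn \<circ> ?\<phi>" by auto
  show "range ?\<phi> \<subseteq> labels"
    using the_inv_into_into[OF inj_on_rxn subsetD[OF assms rangeI]] by auto
qed

theorem mainTheorem11:
  assumes "I \<subseteq> range inflow"
  shows "passes_jacobian_criterion (network I)"
  unfolding passes_jacobian_criterion_def
proof (intro allI impI)
  fix f :: "species \<Rightarrow> species reaction"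
  assume "inj f" and chosen: "\<forall>k. f k \<in> network I \<and> \<not> is_inflow (f k)"
  have "range f \<subseteq> rxn ` labels"
    using chosen assms
    unfolding noninflow_reactions_labelled[symmetric] network_def is_inflow_def by blast
  then obtain \<phi> where "range \<phi> \<subseteq> labels" "f = rxn \<circ> \<phi>"
    by (rule labelled_choice)
  then show "orientation f \<ge> 0" using orientation_labelled_choice by blast
qed

end
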